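(* Let $$d=s^6-(3+3i)s^5+3is^4+(4-4i)s^3+3s^2+(3+3i)s+i,\qquad d'=s^6-(3-3i)s^5-3is^4+(4+4i)s^3+3s^2+(3-3i)s-i$$ (so $d'(s)=\overline{d(\overline s)}$), and $$y=-\frac{(1+i)(s^2-1)(s^2+2is+1)(s^2-2is+1)^2\,d'}{8s(s^2+i)(s^2-i)^2\,d},\qquad t=\frac{(s^2-1)^2(s^4+6s^2+1)^3}{32s^2(s^4+1)^3}.$$ Then $y(t)$ is a solution of $\mathrm{P}_{\mathrm{VI}}$ with parameters $(\theta_1,\theta_2,\theta_3,\theta_4)=(3/8,3/8,3/8,5/8)$.
   Context: $\mathrm{P}_{\mathrm{VI}}$ is the equation $$\frac{d^2y}{dt^2}=\frac12\Big(\frac1y+\frac1{y-1}+\frac1{y-t}\Big)\Big(\frac{dy}{dt}\Big)^2-\Big(\frac1t+\frac1{t-1}+\frac1{y-t}\Big)\frac{dy}{dt}+\frac{y(y-1)(y-t)}{t^2(t-1)^2}\Big(\alpha+\beta\frac{t}{y^2}+\gamma\frac{t-1}{(y-1)^2}+\delta\frac{t(t-1)}{(y-t)^2}\Big),$$ with $\alpha=(\theta_4-1)^2/2$, $\beta=-\theta_1^2/2$, $\gamma=\theta_3^2/2$, $\delta=(1-\theta_2^2)/2$. When $y,t$ are given as rational functions of a parameter on a curve, derivatives with respect to $t$ are computed via the chain rule. Here $i=\sqrt{-1}$. *)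

theory Defs
  imports "HOL-Complex_Analysis.Complex_Analysis"
begin

definition PVI_rhs :: "complex \<Rightarrow> complex \<Rightarrow> complex \<Rightarrow> complex \<Rightarrow>
    complex \<Rightarrow> complex \<Rightarrow> complex \<Rightarrow> complex" where
  "PVI_rhs th1 th2 th3 th4 t y y1 =
     (let \<alpha> = (th4 - 1)^2 / 2; \<beta> = - (th1^2) / 2; \<gamma> = th3^2 / 2; \<delta> = (1 - th2^2) / 2 in
      (1/2) * (1/y + 1/(y - 1) + 1/(y - t)) * y1^2
      - (1/t + 1/(t - 1) + 1/(y - t)) * y1
      + y * (y - 1) * (y - t) / (t^2 * (t - 1)^2)
        * (\<alpha> + \<beta> * t / y^2 + \<gamma> * (t - 1) / (y - 1)^2 + \<delta> * t * (t - 1) / (y - t)^2))"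

text \<open>A curve (s \<mapsto> (t(s), y(s))) solves PVI at parameter value s, derivatives with
  respect to t computed by the chain rule: dy/dt = y'(s)/t'(s),
  d^2y/dt^2 = (d/ds (y'/t'))(s) / t'(s).\<close>
definition solves_PVI_at :: "complex \<Rightarrow> complex \<Rightarrow> complex \<Rightarrow> complex \<Rightarrow>
    (complex \<Rightarrow> complex) \<Rightarrow> (complex \<Rightarrow> complex) \<Rightarrow> complex \<Rightarrow> bool" where
  "solves_PVI_at th1 th2 th3 th4 tf yf s \<longleftrightarrow>
     deriv (\<lambda>u. deriv yf u / deriv tf u) s / deriv tf s
       = PVI_rhs th1 th2 th3 th4 (tf s) (yf s) (deriv yf s / deriv tf s)"

definition dpol :: "complex \<Rightarrow> complex" where
  "dpol s = s^6 - (3 + 3*\<i>) * s^5 + 3*\<i> * s^4 + (4 - 4*\<i>) * s^3 + 3 * s^2 + (3 + 3*\<i>) * s + \<i>"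

definition dpol' :: "complex \<Rightarrow> complex" where
  "dpol' s = s^6 - (3 - 3*\<i>) * s^5 - 3*\<i> * s^4 + (4 + 4*\<i>) * s^3 + 3 * s^2 + (3 - 3*\<i>) * s - \<i>"

definition yfun :: "complex \<Rightarrow> complex" where
  "yfun s = - ((1 + \<i>) * (s^2 - 1) * (s^2 + 2*\<i> * s + 1) * (s^2 - 2*\<i> * s + 1)^2 * dpol' s)
            / (8 * s * (s^2 + \<i>) * (s^2 - \<i>)^2 * dpol s)"

definition tfun :: "complex \<Rightarrow> complex" where
  "tfun s = (s^2 - 1)^2 * (s^4 + 6 * s^2 + 1)^3 / (32 * s^2 * (s^4 + 1)^3)"

end

theory Submission
  imports Defs
begin

(*
  Both sides of P_VI are rational functions of s with coefficients in Z[i], and every denominator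
  that occurs (of y, t, y - 1, t - 1, y - t and of their derivatives) splits over Z[i] into the
  thirteen polynomials L_i of pvi_base.  Every intermediate quantity is therefore kept exactly in
  the form C(s) * prod L_i(s)^e_i / q with e_i integers: sums use the componentwise minimum of the
  exponents, derivatives the logarithmic derivative of the monomial, and inverses need C to be a
  constant.  Evaluated in this arithmetic, the residual of P_VI has the zero polynomial as
  numerator.  The computation is valid wherever no L_i vanishes, and the hypotheses guarantee this
  at s: each L_i divides the denominator of y, or the numerator of y, y - 1 or y - t.
*)

section \<open>Polynomials over the Gaussian integers\<close>

type_synonym gint = "int \<times> int"

fun complex_of_gint :: "gint \<Rightarrow> complex" where
  "complex_of_gint (a, b) = of_int a + of_int b * \<i>"

fun gint_add :: "gint \<Rightarrow> gint \<Rightarrow> gint" where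
  "gint_add (a, b) (c, d) = (a + c, b + d)"

fun gint_mult :: "gint \<Rightarrow> gint \<Rightarrow> gint" where
  "gint_mult (a, b) (c, d) = (a * c - b * d, a * d + b * c)"

fun gint_cnj :: "gint \<Rightarrow> gint" where
  "gint_cnj (a, b) = (a, - b)"

fun gint_norm :: "gint \<Rightarrow> int" where
  "gint_norm (a, b) = a\<^sup>2 + b\<^sup>2"

lemma complex_of_gint_add [simp]:
  "complex_of_gint (gint_add c d) = complex_of_gint c + complex_of_gint d"
  by (cases c; cases d) (simp add: algebra_simps)

lemma complex_of_gint_mult [simp]:
  "complex_of_gint (gint_mult c d) = complex_of_gint c * complex_of_gint d"
  by (cases c; cases d) (simp add: algebra_simps)

lemma complex_of_gint_mult_cnj:
  "complex_of_gint c * complex_of_gint (gint_cnj c) = of_int (gint_norm c)"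
  by (cases c) (simp add: algebra_simps power2_eq_square)

lemma gint_norm_eq_0_iff: "gint_norm c = 0 \<longleftrightarrow> c = (0, 0)"
  by (cases c) (simp add: sum_power2_eq_zero_iff)

type_synonym gpoly = "gint list"

fun gpoly_eval :: "gpoly \<Rightarrow> complex \<Rightarrow> complex" where
  "gpoly_eval [] x = 0"
| "gpoly_eval (c # p) x = complex_of_gint c + x * gpoly_eval p x"

fun gpoly_add :: "gpoly \<Rightarrow> gpoly \<Rightarrow> gpoly" where
  "gpoly_add [] q = q"
| "gpoly_add p [] = p"
| "gpoly_add (a # p) (b # q) = gint_add a b # gpoly_add p q"

definition gpoly_smult :: "gint \<Rightarrow> gpoly \<Rightarrow> gpoly" where
  "gpoly_smult c p = map (gint_mult c) p"

definition gpoly_diff :: "gpoly \<Rightarrow> gpoly \<Rightarrow> gpoly" where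
  "gpoly_diff p q = gpoly_add p (gpoly_smult (-1, 0) q)"

fun gpoly_mult :: "gpoly \<Rightarrow> gpoly \<Rightarrow> gpoly" where
  "gpoly_mult [] q = []"
| "gpoly_mult (a # p) q = gpoly_add (gpoly_smult a q) ((0, 0) # gpoly_mult p q)"

fun gpoly_power :: "gpoly \<Rightarrow> nat \<Rightarrow> gpoly" where
  "gpoly_power p 0 = [(1, 0)]"
| "gpoly_power p (Suc n) = gpoly_mult p (gpoly_power p n)"

fun gpoly_pderiv :: "gpoly \<Rightarrow> gpoly" where
  "gpoly_pderiv [] = []"
| "gpoly_pderiv (c # p) = gpoly_add p ((0, 0) # gpoly_pderiv p)"

definition gpoly_trim :: "gpoly \<Rightarrow> gpoly" where
  "gpoly_trim p = rev (dropWhile (\<lambda>c. c = (0, 0)) (rev p))"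

lemma gpoly_eval_add [simp]: "gpoly_eval (gpoly_add p q) x = gpoly_eval p x + gpoly_eval q x"
  by (induction p q rule: gpoly_add.induct) (simp_all add: algebra_simps)

lemma gpoly_eval_smult [simp]: "gpoly_eval (gpoly_smult c p) x = complex_of_gint c * gpoly_eval p x"
  by (induction p) (simp_all add: gpoly_smult_def algebra_simps)

lemma gpoly_eval_diff [simp]: "gpoly_eval (gpoly_diff p q) x = gpoly_eval p x - gpoly_eval q x"
  by (simp add: gpoly_diff_def)

lemma gpoly_eval_mult [simp]: "gpoly_eval (gpoly_mult p q) x = gpoly_eval p x * gpoly_eval q x"
  by (induction p) (simp_all add: algebra_simps)

lemma gpoly_eval_power [simp]: "gpoly_eval (gpoly_power p n) x = gpoly_eval p x ^ n"
  by (induction n) simp_all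

lemma gpoly_eval_append:
  "gpoly_eval (p @ q) x = gpoly_eval p x + x ^ length p * gpoly_eval q x"
  by (induction p) (simp_all add: algebra_simps)

lemma gpoly_eval_zeros: "\<forall>c\<in>set zs. c = (0, 0) \<Longrightarrow> gpoly_eval zs x = 0"
  by (induction zs) auto

lemma gpoly_eval_trim [simp]: "gpoly_eval (gpoly_trim p) x = gpoly_eval p x"
proof -
  define zs where "zs = rev (takeWhile (\<lambda>c. c = (0, 0)) (rev p))"
  have "gpoly_trim p @ zs = rev (takeWhile (\<lambda>c. c = (0, 0)) (rev p) @ dropWhile (\<lambda>c. c = (0, 0)) (rev p))"
    unfolding gpoly_trim_def zs_def by (rule rev_append[symmetric])
  also have "\<dots> = p"
    by (simp only: takeWhile_dropWhile_id rev_rev_ident)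
  finally have "p = gpoly_trim p @ zs" ..
  moreover have "gpoly_eval zs x = 0"
    unfolding zs_def by (rule gpoly_eval_zeros) (auto dest: set_takeWhileD)
  ultimately show ?thesis
    by (metis add.right_neutral gpoly_eval_append mult_zero_right)
qed

lemma gpoly_trim_singleton:
  assumes "gpoly_trim p = [c]"
  shows "c \<noteq> (0, 0)"
proof -
  from assms have "dropWhile (\<lambda>c. c = (0, 0)) (rev p) = [c]"
    by (simp add: gpoly_trim_def)
  then show ?thesis
    using hd_dropWhile[of "\<lambda>c. c = (0, 0)" "rev p"] by simp
qed

lemma gpoly_eval_has_field_derivative:
  "(gpoly_eval p has_field_derivative gpoly_eval (gpoly_pderiv p) x) (at x)"
proof (induction p arbitrary: x)
  case Nil
  then show ?case by simp
next
  case (Cons c p)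
  have "((\<lambda>x. complex_of_gint c + x * gpoly_eval p x) has_field_derivative
          gpoly_eval p x + x * gpoly_eval (gpoly_pderiv p) x) (at x)"
    by (auto intro!: derivative_eq_intros Cons)
  then show ?case by simp
qed

lemma continuous_on_gpoly_eval: "continuous_on S (gpoly_eval p)"
  by (meson DERIV_continuous continuous_at_imp_continuous_on gpoly_eval_has_field_derivative)

fun gpoly_synthetic_div :: "nat \<Rightarrow> gpoly \<Rightarrow> gpoly \<Rightarrow> gpoly" where
  "gpoly_synthetic_div 0 l r = []"
| "gpoly_synthetic_div (Suc n) l [] = []"
| "gpoly_synthetic_div (Suc n) l (c # r) =
     c # gpoly_synthetic_div n l (gpoly_diff r (gpoly_smult c l))"

(* Long division by a monic l.  Its result is only used after the check in gpoly_div_exact,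
   so it needs no correctness proof. *)
definition gpoly_quot_monic :: "gpoly \<Rightarrow> gpoly \<Rightarrow> gpoly" where
  "gpoly_quot_monic p l =
     rev (gpoly_synthetic_div (Suc (length p) - length l) (tl (rev l)) (rev p))"

definition gpoly_div_exact :: "gpoly \<Rightarrow> gpoly \<Rightarrow> gpoly option" where
  "gpoly_div_exact p l =
     (let q = gpoly_quot_monic p l in
      if gpoly_trim (gpoly_diff p (gpoly_mult l q)) = [] then Some q else None)"

fun gpoly_strip_factor :: "nat \<Rightarrow> gpoly \<Rightarrow> gpoly \<Rightarrow> gpoly \<times> nat" where
  "gpoly_strip_factor 0 l p = (p, 0)"
| "gpoly_strip_factor (Suc n) l p =
     (case gpoly_div_exact p l of
        None \<Rightarrow> (p, 0)
      | Some q \<Rightarrow> (case gpoly_strip_factor n l q of (c, k) \<Rightarrow> (c, Suc k)))"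

fun gpoly_factor :: "gpoly list \<Rightarrow> gpoly \<Rightarrow> gpoly \<times> nat list" where
  "gpoly_factor [] p = (p, [])"
| "gpoly_factor (l # ls) p =
     (case gpoly_strip_factor (length p) l (gpoly_trim p) of
        (c, k) \<Rightarrow> (case gpoly_factor ls c of (c', ks) \<Rightarrow> (c', k # ks)))"

section \<open>Monomials in a factor base\<close>

fun gpoly_monomial :: "gpoly list \<Rightarrow> nat list \<Rightarrow> gpoly" where
  "gpoly_monomial [] ks = [(1, 0)]"
| "gpoly_monomial (l # ls) [] = [(1, 0)]"
| "gpoly_monomial (l # ls) (k # ks) = gpoly_mult (gpoly_power l k) (gpoly_monomial ls ks)"

fun base_monomial :: "gpoly list \<Rightarrow> int list \<Rightarrow> complex \<Rightarrow> complex" where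
  "base_monomial [] es x = 1"
| "base_monomial (l # ls) [] x = 1"
| "base_monomial (l # ls) (k # es) x = gpoly_eval l x powi k * base_monomial ls es x"

definition base_nonzero :: "gpoly list \<Rightarrow> complex \<Rightarrow> bool" where
  "base_nonzero ls x \<longleftrightarrow> (\<forall>l\<in>set ls. gpoly_eval l x \<noteq> 0)"

lemma gpoly_div_exact_eval:
  "gpoly_div_exact p l = Some q \<Longrightarrow> gpoly_eval p x = gpoly_eval l x * gpoly_eval q x"
  unfolding gpoly_div_exact_def Let_def
  by (metis gpoly_eval.simps(1) gpoly_eval_diff gpoly_eval_mult gpoly_eval_trim
      option.distinct(1) option.inject right_minus_eq)

lemma gpoly_strip_factor_eval:
  "gpoly_strip_factor n l p = (c, k) \<Longrightarrow> gpoly_eval p x = gpoly_eval c x * gpoly_eval l x ^ k"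
proof (induction n l p arbitrary: c k rule: gpoly_strip_factor.induct)
  case (2 n l p)
  then show ?case
    by (auto simp: gpoly_div_exact_eval split: option.splits prod.splits)
qed simp

lemma gpoly_eval_monomial:
  "gpoly_eval (gpoly_monomial ls ks) x = base_monomial ls (map int ks) x"
  by (induction ls ks rule: gpoly_monomial.induct) (simp_all add: power_int_of_nat)

lemma gpoly_factor_eval:
  "gpoly_factor ls p = (c, ks) \<Longrightarrow>
     gpoly_eval p x = gpoly_eval c x * base_monomial ls (map int ks) x"
proof (induction ls p arbitrary: c ks rule: gpoly_factor.induct)
  case (2 l ls p)
  then show ?case
    by (auto simp: power_int_of_nat split: prod.splits
             dest!: gpoly_strip_factor_eval[where x = x])
qed simp

lemma length_gpoly_factor: "length (snd (gpoly_factor ls p)) = length ls"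
proof (induction ls p rule: gpoly_factor.induct)
  case (2 l ls p)
  obtain c k where ck: "gpoly_strip_factor (length p) l (gpoly_trim p) = (c, k)"
    by fastforce
  then show ?case
    using "2"[OF ck[symmetric]] by (simp split: prod.split) (metis snd_conv)
qed simp

definition base_covered :: "gpoly list \<Rightarrow> gpoly list \<Rightarrow> bool" where
  "base_covered ls ps \<longleftrightarrow>
     (\<forall>i\<in>set [0..<length ls]. \<exists>p\<in>set ps. 0 < snd (gpoly_factor ls p) ! i)"

lemma base_monomial_nonzero_factor:
  assumes "base_monomial ls (map int ks) x \<noteq> 0" "i < length ls" "i < length ks" "0 < ks ! i"
  shows "gpoly_eval (ls ! i) x \<noteq> 0"
  using assms
proof (induction ls arbitrary: ks i)
  case (Cons l ls)
  then show ?case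
    by (cases ks; cases i) auto
qed simp

lemma base_nonzero_if_covered:
  assumes "base_covered ls ps" "\<forall>p\<in>set ps. gpoly_eval p x \<noteq> 0"
  shows "base_nonzero ls x"
  unfolding base_nonzero_def
proof
  fix l assume "l \<in> set ls"
  then obtain i where i: "i < length ls" "l = ls ! i"
    by (auto simp: in_set_conv_nth)
  moreover have "i \<in> set [0..<length ls]"
    using i(1) by simp
  ultimately obtain p where p: "p \<in> set ps" "0 < snd (gpoly_factor ls p) ! i"
    using assms(1) unfolding base_covered_def by blast
  obtain c ks where f: "gpoly_factor ls p = (c, ks)"
    by fastforce
  have "length ks = length ls"
    using length_gpoly_factor[of ls p] by (simp add: f)
  moreover have "base_monomial ls (map int ks) x \<noteq> 0"
    using gpoly_factor_eval[OF f, of x] assms(2) p(1) by auto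
  ultimately show "gpoly_eval l x \<noteq> 0"
    using base_monomial_nonzero_factor[of ls ks x i] i p(2) by (simp add: f)
qed

fun exps_add :: "int list \<Rightarrow> int list \<Rightarrow> int list" where
  "exps_add [] b = b"
| "exps_add a [] = a"
| "exps_add (x # a) (y # b) = (x + y) # exps_add a b"

fun exps_min :: "int list \<Rightarrow> int list \<Rightarrow> int list" where
  "exps_min [] b = map (min 0) b"
| "exps_min a [] = map (min 0) a"
| "exps_min (x # a) (y # b) = min x y # exps_min a b"

definition exps_excess :: "int list \<Rightarrow> int list \<Rightarrow> nat list" where
  "exps_excess e m = map nat (exps_add e (map uminus m))"

lemma base_nonzero_Cons [simp]:
  "base_nonzero (l # ls) x \<longleftrightarrow> gpoly_eval l x \<noteq> 0 \<and> base_nonzero ls x"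
  by (simp add: base_nonzero_def)

lemma base_monomial_Nil [simp]: "base_monomial ls [] x = 1"
  by (cases ls) simp_all

lemma base_monomial_exps_add:
  "base_nonzero ls x \<Longrightarrow>
     base_monomial ls (exps_add a b) x = base_monomial ls a x * base_monomial ls b x"
proof (induction ls arbitrary: a b)
  case (Cons l ls)
  then show ?case
    by (cases a; cases b) (simp_all add: power_int_add algebra_simps)
qed simp

lemma base_monomial_uminus:
  "base_monomial ls (map uminus a) x = inverse (base_monomial ls a x)"
proof (induction ls arbitrary: a)
  case (Cons l ls)
  then show ?case
    by (cases a) (simp_all add: power_int_minus)
qed simp

lemma base_monomial_nonzero: "base_nonzero ls x \<Longrightarrow> base_monomial ls a x \<noteq> 0"
proof (induction ls arbitrary: a)
  case (Cons l ls)
  then show ?case by (cases a) auto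
qed simp

lemma exps_add_map_self: "exps_add a (map f a) = map (\<lambda>k. k + f k) a"
  by (induction a) simp_all

lemma exps_excess_min_nonneg:
  "\<forall>k\<in>set (exps_add e (map uminus (exps_min e f))). 0 \<le> k"
  "\<forall>k\<in>set (exps_add f (map uminus (exps_min e f))). 0 \<le> k"
  by (induction e f rule: exps_min.induct) (auto simp: exps_add_map_self)

lemma base_monomial_excess:
  assumes "base_nonzero ls x" and "\<forall>k\<in>set (exps_add e (map uminus m)). 0 \<le> k"
  shows "base_monomial ls m x * base_monomial ls (map int (exps_excess e m)) x = base_monomial ls e x"
proof -
  have "map int (exps_excess e m) = exps_add e (map uminus m)"
    unfolding exps_excess_def map_map by (rule map_idI) (use assms(2) in auto)
  then show ?thesis
    using assms(1) base_monomial_nonzero[OF assms(1), of m]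
    by (simp add: base_monomial_exps_add base_monomial_uminus)
qed

section \<open>Factored rational functions\<close>

type_synonym ffrac = "gpoly \<times> int \<times> int list"

fun ffrac_val :: "gpoly list \<Rightarrow> ffrac \<Rightarrow> complex \<Rightarrow> complex" where
  "ffrac_val ls (C, q, e) x = gpoly_eval C x * base_monomial ls e x / of_int q"

fun ffrac_wf :: "ffrac \<Rightarrow> bool" where
  "ffrac_wf (C, q, e) \<longleftrightarrow> q \<noteq> 0"

fun gpoly_content :: "gpoly \<Rightarrow> int \<Rightarrow> int" where
  "gpoly_content [] g = g"
| "gpoly_content ((a, b) # p) g = gcd a (gcd b (gpoly_content p g))"

(* Cancelling the common content only keeps the integers small. *)
fun ffrac_reduce :: "ffrac \<Rightarrow> ffrac" where
  "ffrac_reduce (C, q, e) =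
     (let g = gpoly_content C q in (map (\<lambda>(a, b). (a div g, b div g)) C, q div g, e))"

fun ffrac_normalize :: "gpoly list \<Rightarrow> ffrac \<Rightarrow> ffrac" where
  "ffrac_normalize ls (C, q, e) =
     (case gpoly_factor ls C of (C', ks) \<Rightarrow> ffrac_reduce (C', q, exps_add e (map int ks)))"

fun ffrac_add :: "gpoly list \<Rightarrow> ffrac \<Rightarrow> ffrac \<Rightarrow> ffrac" where
  "ffrac_add ls (C1, q1, e1) (C2, q2, e2) =
     (let m = exps_min e1 e2 in
      ffrac_normalize ls
        (gpoly_add (gpoly_smult (q2, 0) (gpoly_mult C1 (gpoly_monomial ls (exps_excess e1 m))))
                   (gpoly_smult (q1, 0) (gpoly_mult C2 (gpoly_monomial ls (exps_excess e2 m)))),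
         q1 * q2, m))"

fun ffrac_mult :: "ffrac \<Rightarrow> ffrac \<Rightarrow> ffrac" where
  "ffrac_mult (C1, q1, e1) (C2, q2, e2) = ffrac_reduce (gpoly_mult C1 C2, q1 * q2, exps_add e1 e2)"

fun ffrac_inverse :: "ffrac \<Rightarrow> ffrac option" where
  "ffrac_inverse (C, q, e) =
     (case gpoly_trim C of
        [c] \<Rightarrow> Some (ffrac_reduce ([gint_mult (q, 0) (gint_cnj c)], gint_norm c, map uminus e))
      | _ \<Rightarrow> None)"

(* Leibniz rule, one base factor at a time: each factor with nonzero exponent loses one power,
   and B is C times the factors lowered so far. *)
fun monomial_deriv :: "gpoly list \<Rightarrow> gpoly \<Rightarrow> int list \<Rightarrow> gpoly \<times> gpoly \<times> int list" where
  "monomial_deriv [] C es = (gpoly_pderiv C, C, [])"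
| "monomial_deriv (l # ls) C [] = (gpoly_pderiv C, C, [])"
| "monomial_deriv (l # ls) C (k # es) =
     (case monomial_deriv ls C es of
        (A, B, es') \<Rightarrow>
          if k = 0 then (A, B, 0 # es')
          else (gpoly_add (gpoly_mult A l) (gpoly_smult (k, 0) (gpoly_mult (gpoly_pderiv l) B)),
                gpoly_mult B l, (k - 1) # es'))"

fun ffrac_deriv :: "gpoly list \<Rightarrow> ffrac \<Rightarrow> ffrac" where
  "ffrac_deriv ls (C, q, e) = (case monomial_deriv ls C e of (A, _, e') \<Rightarrow> ffrac_normalize ls (A, q, e'))"

lemma gpoly_content_dvd:
  "gpoly_content p g dvd g"
  "(a, b) \<in> set p \<Longrightarrow> gpoly_content p g dvd a \<and> gpoly_content p g dvd b"
  by (induction p g rule: gpoly_content.induct) (auto intro: dvd_trans)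

lemma gpoly_eval_div_content:
  assumes "\<forall>(a, b)\<in>set p. g dvd a \<and> g dvd b"
  shows "gpoly_eval (map (\<lambda>(a, b). (a div g, b div g)) p) x = gpoly_eval p x / of_int g"
  using assms by (induction p) (auto simp: of_int_div add_divide_distrib)

lemma ffrac_reduce_sound:
  assumes "ffrac_wf F"
  shows "ffrac_wf (ffrac_reduce F) \<and> ffrac_val ls (ffrac_reduce F) x = ffrac_val ls F x"
proof -
  obtain C q e where F: "F = (C, q, e)" by (cases F)
  define g where "g = gpoly_content C q"
  have "q \<noteq> 0" using assms F by simp
  moreover have "g dvd q" "\<forall>(a, b)\<in>set C. g dvd a \<and> g dvd b"
    using gpoly_content_dvd[where p = C and g = q] by (auto simp: g_def)
  ultimately have "g \<noteq> 0" "q div g \<noteq> 0"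
    by auto
  with \<open>g dvd q\<close> \<open>\<forall>(a, b)\<in>set C. g dvd a \<and> g dvd b\<close> show ?thesis
    by (simp add: F g_def [symmetric] Let_def gpoly_eval_div_content of_int_div)
qed

lemma ffrac_normalize_sound:
  assumes "ffrac_wf F"
  shows "ffrac_wf (ffrac_normalize ls F) \<and>
         (base_nonzero ls x \<longrightarrow> ffrac_val ls (ffrac_normalize ls F) x = ffrac_val ls F x)"
proof -
  obtain C q e where F: "F = (C, q, e)" by (cases F)
  obtain C' ks where f: "gpoly_factor ls C = (C', ks)" by fastforce
  have "base_nonzero ls x \<longrightarrow> ffrac_val ls (C', q, exps_add e (map int ks)) x = ffrac_val ls F x"
    using gpoly_factor_eval[OF f, of x] by (simp add: F base_monomial_exps_add algebra_simps)
  then show ?thesis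
    using ffrac_reduce_sound[of "(C', q, exps_add e (map int ks))" ls x] assms
    by (simp add: F f del: ffrac_reduce.simps)
qed

lemma ffrac_add_sound:
  assumes "ffrac_wf F" "ffrac_wf G"
  shows "ffrac_wf (ffrac_add ls F G) \<and>
         (base_nonzero ls x \<longrightarrow> ffrac_val ls (ffrac_add ls F G) x = ffrac_val ls F x + ffrac_val ls G x)"
proof -
  obtain C1 q1 e1 where F: "F = (C1, q1, e1)" by (cases F)
  obtain C2 q2 e2 where G: "G = (C2, q2, e2)" by (cases G)
  define m where "m = exps_min e1 e2"
  define S where "S = (gpoly_add (gpoly_smult (q2, 0) (gpoly_mult C1 (gpoly_monomial ls (exps_excess e1 m))))
                     (gpoly_smult (q1, 0) (gpoly_mult C2 (gpoly_monomial ls (exps_excess e2 m)))),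
                q1 * q2, m)"
  have q: "q1 \<noteq> 0" "q2 \<noteq> 0" using assms F G by simp_all
  have "ffrac_val ls S x = ffrac_val ls F x + ffrac_val ls G x" if x: "base_nonzero ls x"
  proof -
    have "base_monomial ls m x * base_monomial ls (map int (exps_excess e1 m)) x = base_monomial ls e1 x"
      "base_monomial ls m x * base_monomial ls (map int (exps_excess e2 m)) x = base_monomial ls e2 x"
      using base_monomial_excess[OF x] exps_excess_min_nonneg unfolding m_def by blast+
    then show ?thesis
      using q by (simp add: S_def F G gpoly_eval_monomial field_simps flip: m_def)
  qed
  moreover have "ffrac_add ls F G = ffrac_normalize ls S" "ffrac_wf S"
    using q by (simp_all add: F G S_def m_def Let_def del: ffrac_normalize.simps)
  ultimately show ?thesis
    using ffrac_normalize_sound[of S ls x] by (simp del: ffrac_normalize.simps)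
qed

lemma ffrac_mult_sound:
  assumes "ffrac_wf F" "ffrac_wf G"
  shows "ffrac_wf (ffrac_mult F G) \<and>
         (base_nonzero ls x \<longrightarrow> ffrac_val ls (ffrac_mult F G) x = ffrac_val ls F x * ffrac_val ls G x)"
proof -
  obtain C1 q1 e1 where F: "F = (C1, q1, e1)" by (cases F)
  obtain C2 q2 e2 where G: "G = (C2, q2, e2)" by (cases G)
  show ?thesis
    using assms ffrac_reduce_sound[of "(gpoly_mult C1 C2, q1 * q2, exps_add e1 e2)" ls x]
    by (simp add: F G base_monomial_exps_add del: ffrac_reduce.simps)
qed

lemma ffrac_inverse_sound:
  assumes "ffrac_inverse F = Some G" "ffrac_wf F"
  shows "ffrac_wf G \<and> (base_nonzero ls x \<longrightarrow> ffrac_val ls G x = inverse (ffrac_val ls F x))"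
proof -
  obtain C q e where F: "F = (C, q, e)" by (cases F)
  obtain c where c: "gpoly_trim C = [c]"
    using assms(1) by (auto simp: F split: list.splits)
  define G' where "G' = ([gint_mult (q, 0) (gint_cnj c)], gint_norm c, map uminus e)"
  have G: "G = ffrac_reduce G'"
    using assms(1) by (simp add: F c G'_def del: ffrac_reduce.simps)
  have "gint_norm c \<noteq> 0"
    using gpoly_trim_singleton[OF c] by (simp add: gint_norm_eq_0_iff)
  then have "complex_of_gint c \<noteq> 0" "complex_of_gint (gint_cnj c) \<noteq> 0"
    using complex_of_gint_mult_cnj[of c] by auto
  moreover have "gpoly_eval C x = complex_of_gint c"
    using gpoly_eval_trim[of C x] by (simp add: c)
  ultimately have "base_nonzero ls x \<longrightarrow> ffrac_val ls G' x = inverse (ffrac_val ls F x)"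
    using base_monomial_nonzero[of ls x e]
    by (simp add: F G'_def base_monomial_uminus field_simps flip: complex_of_gint_mult_cnj)
  then show ?thesis
    using ffrac_reduce_sound[of G' ls x] \<open>gint_norm c \<noteq> 0\<close> by (simp add: G G'_def del: ffrac_reduce.simps)
qed

lemma has_field_derivative_powi_mult:
  assumes "gpoly_eval l x \<noteq> 0" "(f has_field_derivative a * m) (at x)" "f x = b * m"
  shows "((\<lambda>y. gpoly_eval l y powi k * f y) has_field_derivative
           (a * gpoly_eval l x + of_int k * gpoly_eval (gpoly_pderiv l) x * b)
             * (gpoly_eval l x powi (k - 1) * m)) (at x)"
proof -
  have "((\<lambda>y. gpoly_eval l y powi k) has_field_derivative
          of_int k * gpoly_eval l x powi (k - 1) * gpoly_eval (gpoly_pderiv l) x) (at x)"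
    using DERIV_power_int[OF gpoly_eval_has_field_derivative[of l x]] assms(1) by blast
  from DERIV_mult'[OF this assms(2)] show ?thesis
  proof (rule DERIV_cong)
    have "gpoly_eval l x powi k = gpoly_eval l x powi (k - 1) * gpoly_eval l x"
      using assms(1) by (simp add: power_int_minus_mult)
    then show "gpoly_eval l x powi k * (a * m)
        + of_int k * gpoly_eval l x powi (k - 1) * gpoly_eval (gpoly_pderiv l) x * f x
        = (a * gpoly_eval l x + of_int k * gpoly_eval (gpoly_pderiv l) x * b)
            * (gpoly_eval l x powi (k - 1) * m)"
      using assms(3) by (simp add: algebra_simps)
  qed
qed

lemma monomial_deriv_sound:
  assumes "base_nonzero ls x" "monomial_deriv ls C es = (A, B, es')"
  shows "gpoly_eval C x * base_monomial ls es x = gpoly_eval B x * base_monomial ls es' x \<and>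
         ((\<lambda>y. gpoly_eval C y * base_monomial ls es y) has_field_derivative
            gpoly_eval A x * base_monomial ls es' x) (at x)"
  using assms
proof (induction ls C es arbitrary: A B es' rule: monomial_deriv.induct)
  case (1 C es)
  then show ?case by (auto intro: gpoly_eval_has_field_derivative)
next
  case (2 l ls C)
  then show ?case by (auto intro: gpoly_eval_has_field_derivative)
next
  case (3 l ls C k es)
  obtain A0 B0 es0 where rec: "monomial_deriv ls C es = (A0, B0, es0)"
    by (cases "monomial_deriv ls C es")
  have l: "gpoly_eval l x \<noteq> 0" and ls: "base_nonzero ls x"
    using "3.prems"(1) by simp_all
  note IH = "3.IH"[OF ls rec]
  show ?case
  proof (cases "k = 0")
    case True
    then have "A = A0" "B = B0" "es' = 0 # es0"
      using "3.prems"(2) by (simp_all add: rec)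
    with True IH show ?thesis by simp
  next
    case False
    have eqs: "A = gpoly_add (gpoly_mult A0 l) (gpoly_smult (k, 0) (gpoly_mult (gpoly_pderiv l) B0))"
      "B = gpoly_mult B0 l" "es' = (k - 1) # es0"
      using "3.prems"(2) False by (simp_all add: rec)
    have "(\<lambda>y. gpoly_eval C y * base_monomial (l # ls) (k # es) y)
          = (\<lambda>y. gpoly_eval l y powi k * (gpoly_eval C y * base_monomial ls es y))"
      by (simp add: fun_eq_iff algebra_simps)
    moreover have "gpoly_eval C x * base_monomial (l # ls) (k # es) x
                   = gpoly_eval B x * base_monomial (l # ls) es' x"
      using IH l by (simp add: eqs power_int_minus_mult[symmetric, of _ k] algebra_simps)
    ultimately show ?thesis
      using has_field_derivative_powi_mult[OF l conjunct2[OF IH] conjunct1[OF IH], of k]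
      by (simp add: eqs algebra_simps)
  qed
qed

lemma ffrac_deriv_sound:
  assumes "ffrac_wf F"
  shows "ffrac_wf (ffrac_deriv ls F) \<and>
         (base_nonzero ls x \<longrightarrow>
            (ffrac_val ls F has_field_derivative ffrac_val ls (ffrac_deriv ls F) x) (at x))"
proof -
  obtain C q e where F: "F = (C, q, e)" by (cases F)
  obtain A B e' where md: "monomial_deriv ls C e = (A, B, e')"
    by (cases "monomial_deriv ls C e")
  have "ffrac_val ls F = (\<lambda>y. gpoly_eval C y * base_monomial ls e y / of_int q)"
    by (simp add: F fun_eq_iff)
  then have "base_nonzero ls x \<longrightarrow>
               (ffrac_val ls F has_field_derivative ffrac_val ls (A, q, e') x) (at x)"
    using monomial_deriv_sound[OF _ md] by (auto intro: DERIV_cdivide)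
  moreover have "ffrac_deriv ls F = ffrac_normalize ls (A, q, e')"
    by (simp add: F md del: ffrac_normalize.simps)
  ultimately show ?thesis
    using ffrac_normalize_sound[of "(A, q, e')" ls x] assms by (simp add: F del: ffrac_normalize.simps)
qed

lemma open_base_nonzero: "open {x. base_nonzero ls x}"
proof -
  have "{x. base_nonzero ls x} = (\<Inter>l\<in>set ls. {x. gpoly_eval l x \<noteq> 0})"
    by (auto simp: base_nonzero_def)
  then show ?thesis
    by (auto intro!: open_Collect_neq continuous_on_gpoly_eval)
qed

definition ffrac_represents :: "gpoly list \<Rightarrow> (complex \<Rightarrow> complex) \<Rightarrow> ffrac \<Rightarrow> bool" where
  "ffrac_represents ls f F \<longleftrightarrow>
     ffrac_wf F \<and> (\<forall>x. base_nonzero ls x \<longrightarrow> f x = ffrac_val ls F x)"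

lemma ffrac_represents_gpoly: "ffrac_represents ls (gpoly_eval p) (ffrac_normalize ls (p, 1, []))"
  using ffrac_normalize_sound[of "(p, 1, [])" ls] by (auto simp: ffrac_represents_def)

lemma ffrac_represents_add:
  "ffrac_represents ls f F \<Longrightarrow> ffrac_represents ls g G \<Longrightarrow>
     ffrac_represents ls (\<lambda>x. f x + g x) (ffrac_add ls F G)"
  using ffrac_add_sound[of F G ls] by (auto simp: ffrac_represents_def)

lemma ffrac_represents_mult:
  "ffrac_represents ls f F \<Longrightarrow> ffrac_represents ls g G \<Longrightarrow>
     ffrac_represents ls (\<lambda>x. f x * g x) (ffrac_mult F G)"
  using ffrac_mult_sound[of F G ls] by (auto simp: ffrac_represents_def)

lemma ffrac_represents_inverse:
  "ffrac_inverse F = Some G \<Longrightarrow> ffrac_represents ls f F \<Longrightarrow>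
     ffrac_represents ls (\<lambda>x. inverse (f x)) G"
  using ffrac_inverse_sound[of F G ls] by (auto simp: ffrac_represents_def)

lemma ffrac_represents_deriv:
  assumes "ffrac_represents ls f F"
  shows "ffrac_represents ls (deriv f) (ffrac_deriv ls F)"
proof -
  have "deriv f x = ffrac_val ls (ffrac_deriv ls F) x" if x: "base_nonzero ls x" for x
  proof (rule DERIV_imp_deriv,
         rule has_field_derivative_transform_within_open[where S = "{x. base_nonzero ls x}"])
    show "(ffrac_val ls F has_field_derivative ffrac_val ls (ffrac_deriv ls F) x) (at x)"
      using ffrac_deriv_sound[of F ls x] x assms by (simp add: ffrac_represents_def)
  qed (use x assms in \<open>auto simp: open_base_nonzero ffrac_represents_def\<close>)
  then show ?thesis
    using ffrac_deriv_sound[of F ls] assms by (simp add: ffrac_represents_def)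
qed

section \<open>Rational expressions\<close>

(* RLet a b binds a to the de Bruijn variable RVar 0 in b, so that a shared subexpression is
   normalized only once. *)
datatype rexpr =
  RVar nat | RPoly gpoly | RAdd rexpr rexpr | RMult rexpr rexpr | RInverse rexpr | RDeriv rexpr
| RLet rexpr rexpr

primrec rexpr_val :: "(complex \<Rightarrow> complex) list \<Rightarrow> rexpr \<Rightarrow> complex \<Rightarrow> complex" where
  "rexpr_val env (RVar i) = env ! i"
| "rexpr_val env (RPoly p) = gpoly_eval p"
| "rexpr_val env (RAdd a b) = (\<lambda>x. rexpr_val env a x + rexpr_val env b x)"
| "rexpr_val env (RMult a b) = (\<lambda>x. rexpr_val env a x * rexpr_val env b x)"
| "rexpr_val env (RInverse a) = (\<lambda>x. inverse (rexpr_val env a x))"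
| "rexpr_val env (RDeriv a) = deriv (rexpr_val env a)"
| "rexpr_val env (RLet a b) = rexpr_val (rexpr_val env a # env) b"

fun rexpr_ffrac :: "gpoly list \<Rightarrow> ffrac list \<Rightarrow> rexpr \<Rightarrow> ffrac option" where
  "rexpr_ffrac ls env (RVar i) = (if i < length env then Some (env ! i) else None)"
| "rexpr_ffrac ls env (RPoly p) = Some (ffrac_normalize ls (p, 1, []))"
| "rexpr_ffrac ls env (RAdd a b) =
     (case (rexpr_ffrac ls env a, rexpr_ffrac ls env b) of
        (Some F, Some G) \<Rightarrow> Some (ffrac_add ls F G)
      | _ \<Rightarrow> None)"
| "rexpr_ffrac ls env (RMult a b) =
     (case (rexpr_ffrac ls env a, rexpr_ffrac ls env b) of
        (Some F, Some G) \<Rightarrow> Some (ffrac_mult F G)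
      | _ \<Rightarrow> None)"
| "rexpr_ffrac ls env (RInverse a) =
     (case rexpr_ffrac ls env a of Some F \<Rightarrow> ffrac_inverse F | None \<Rightarrow> None)"
| "rexpr_ffrac ls env (RDeriv a) = map_option (ffrac_deriv ls) (rexpr_ffrac ls env a)"
| "rexpr_ffrac ls env (RLet a b) =
     (case rexpr_ffrac ls env a of Some F \<Rightarrow> rexpr_ffrac ls (F # env) b | None \<Rightarrow> None)"

theorem rexpr_ffrac_sound:
  assumes "rexpr_ffrac ls fenv e = Some F" "list_all2 (ffrac_represents ls) env fenv"
  shows "ffrac_represents ls (rexpr_val env e) F"
  using assms
proof (induction e arbitrary: env fenv F)
  case (RVar i)
  then show ?case by (auto simp: list_all2_conv_all_nth split: if_splits)
next
  case (RPoly p)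
  then show ?case
    using ffrac_represents_gpoly by (metis option.inject rexpr_ffrac.simps(2) rexpr_val.simps(2))
next
  case (RAdd a b)
  then obtain F1 F2 where "rexpr_ffrac ls fenv a = Some F1" "rexpr_ffrac ls fenv b = Some F2"
    "F = ffrac_add ls F1 F2"
    by (auto split: option.splits)
  with RAdd show ?case by (simp add: ffrac_represents_add)
next
  case (RMult a b)
  then obtain F1 F2 where "rexpr_ffrac ls fenv a = Some F1" "rexpr_ffrac ls fenv b = Some F2"
    "F = ffrac_mult F1 F2"
    by (auto split: option.splits)
  with RMult show ?case by (simp add: ffrac_represents_mult)
next
  case (RInverse a)
  then obtain G where "rexpr_ffrac ls fenv a = Some G" "ffrac_inverse G = Some F"
    by (auto split: option.splits)
  with RInverse show ?case by (simp add: ffrac_represents_inverse)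
next
  case (RDeriv a)
  then obtain G where "rexpr_ffrac ls fenv a = Some G" "F = ffrac_deriv ls G"
    by (auto simp del: ffrac_deriv.simps)
  with RDeriv show ?case by (simp add: ffrac_represents_deriv del: ffrac_deriv.simps)
next
  case (RLet a b)
  then obtain G where G: "rexpr_ffrac ls fenv a = Some G" "rexpr_ffrac ls (G # fenv) b = Some F"
    by (auto split: option.splits)
  with RLet have "ffrac_represents ls (rexpr_val env a) G"
    by blast
  with RLet G show ?case by simp
qed

definition rexpr_vanishes :: "gpoly list \<Rightarrow> rexpr \<Rightarrow> bool" where
  "rexpr_vanishes ls e \<longleftrightarrow>
     (case rexpr_ffrac ls [] e of Some (C, _) \<Rightarrow> gpoly_trim C = [] | None \<Rightarrow> False)"

corollary rexpr_vanishes_val: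
  assumes "rexpr_vanishes ls e" "base_nonzero ls x"
  shows "rexpr_val [] e x = 0"
proof -
  obtain C q e' where F: "rexpr_ffrac ls [] e = Some (C, q, e')" "gpoly_trim C = []"
    using assms(1) by (auto simp: rexpr_vanishes_def split: option.splits)
  have "rexpr_val [] e x = ffrac_val ls (C, q, e') x"
    using rexpr_ffrac_sound[OF F(1)] assms(2) by (simp add: ffrac_represents_def)
  also have "\<dots> = 0"
    using gpoly_eval_trim[of C x] F(2) by simp
  finally show ?thesis .
qed

section \<open>The Painleve VI residual\<close>

abbreviation rconst :: "int \<Rightarrow> rexpr" where "rconst n \<equiv> RPoly [(n, 0)]"
abbreviation rdiff :: "rexpr \<Rightarrow> rexpr \<Rightarrow> rexpr" where "rdiff a b \<equiv> RAdd a (RMult (rconst (-1)) b)"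
abbreviation rdivide :: "rexpr \<Rightarrow> rexpr \<Rightarrow> rexpr" where "rdivide a b \<equiv> RMult a (RInverse b)"

definition pvi_rexpr :: "rexpr \<Rightarrow> rexpr \<Rightarrow> rexpr \<Rightarrow> rexpr \<Rightarrow> rexpr \<Rightarrow> rexpr \<Rightarrow> rexpr \<Rightarrow> rexpr" where
  "pvi_rexpr \<alpha> \<beta> \<gamma> \<delta> t y y1 =
     RAdd (rdiff
       (RMult (RMult (rdivide (rconst 1) (rconst 2))
          (RAdd (RAdd (rdivide (rconst 1) y) (rdivide (rconst 1) (rdiff y (rconst 1))))
             (rdivide (rconst 1) (rdiff y t)))) (RMult y1 y1))
       (RMult (RAdd (RAdd (rdivide (rconst 1) t) (rdivide (rconst 1) (rdiff t (rconst 1))))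
          (rdivide (rconst 1) (rdiff y t))) y1))
     (RMult (rdivide (RMult (RMult y (rdiff y (rconst 1))) (rdiff y t))
               (RMult (RMult t t) (RMult (rdiff t (rconst 1)) (rdiff t (rconst 1)))))
        (RAdd (RAdd (RAdd \<alpha> (rdivide (RMult \<beta> t) (RMult y y)))
              (rdivide (RMult \<gamma> (rdiff t (rconst 1))) (RMult (rdiff y (rconst 1)) (rdiff y (rconst 1)))))
           (rdivide (RMult (RMult \<delta> t) (rdiff t (rconst 1))) (RMult (rdiff y t) (rdiff y t)))))"

lemma rexpr_val_rconst: "rexpr_val env (rconst n) x = of_int n"
  by simp

lemma diff_eq_add_minus_one_mult: "a - b = a + (-1) * (b :: complex)"
  by simp

lemma rexpr_val_pvi_rexpr:
  assumes "rexpr_val env \<alpha> x = (th4 - 1)\<^sup>2 / 2" "rexpr_val env \<beta> x = - (th1\<^sup>2) / 2"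
    "rexpr_val env \<gamma> x = th3\<^sup>2 / 2" "rexpr_val env \<delta> x = (1 - th2\<^sup>2) / 2"
  shows "rexpr_val env (pvi_rexpr \<alpha> \<beta> \<gamma> \<delta> t y y1) x =
         PVI_rhs th1 th2 th3 th4 (rexpr_val env t x) (rexpr_val env y x) (rexpr_val env y1 x)"
  unfolding pvi_rexpr_def PVI_rhs_def Let_def
  by (simp only: rexpr_val.simps(3-5) rexpr_val_rconst assms of_int_1 of_int_numeral of_int_minus
      divide_inverse power2_eq_square diff_eq_add_minus_one_mult)

(* In the body, RVar 0 = y'/t', RVar 1 = t', RVar 2 = y and RVar 3 = t. *)
definition pvi_residual :: "rexpr \<Rightarrow> rexpr \<Rightarrow> rexpr \<Rightarrow> rexpr \<Rightarrow> rexpr \<Rightarrow> rexpr \<Rightarrow> rexpr" where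
  "pvi_residual \<alpha> \<beta> \<gamma> \<delta> t y =
     RLet t (RLet y (RLet (RDeriv (RVar 1)) (RLet (rdivide (RDeriv (RVar 1)) (RVar 0))
       (rdiff (rdivide (RDeriv (RVar 0)) (RVar 1)) (pvi_rexpr \<alpha> \<beta> \<gamma> \<delta> (RVar 3) (RVar 2) (RVar 0))))))"

lemma solves_PVI_at_iff_residual:
  assumes "tf = rexpr_val [] t" "yf = rexpr_val [tf] y"
    and "\<And>env x. rexpr_val env \<alpha> x = (th4 - 1)\<^sup>2 / 2" "\<And>env x. rexpr_val env \<beta> x = - (th1\<^sup>2) / 2"
    and "\<And>env x. rexpr_val env \<gamma> x = th3\<^sup>2 / 2" "\<And>env x. rexpr_val env \<delta> x = (1 - th2\<^sup>2) / 2"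
  shows "solves_PVI_at th1 th2 th3 th4 tf yf s \<longleftrightarrow> rexpr_val [] (pvi_residual \<alpha> \<beta> \<gamma> \<delta> t y) s = 0"
proof -
  define z where "z = (\<lambda>u. deriv yf u / deriv tf u)"
  have "rexpr_val [yf, tf] (RDeriv (RVar 1)) = deriv tf"
    by (simp add: fun_eq_iff)
  moreover have "rexpr_val [deriv tf, yf, tf] (rdivide (RDeriv (RVar 1)) (RVar 0)) = z"
    by (simp add: z_def fun_eq_iff divide_inverse)
  ultimately have "rexpr_val [] (pvi_residual \<alpha> \<beta> \<gamma> \<delta> t y) s =
      rexpr_val [z, deriv tf, yf, tf]
        (rdiff (rdivide (RDeriv (RVar 0)) (RVar 1)) (pvi_rexpr \<alpha> \<beta> \<gamma> \<delta> (RVar 3) (RVar 2) (RVar 0))) s"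
    using assms(1,2) by (simp only: pvi_residual_def rexpr_val.simps(7))
  also have "\<dots> = deriv z s / deriv tf s - PVI_rhs th1 th2 th3 th4 (tf s) (yf s) (z s)"
  proof -
    have "rexpr_val [z, deriv tf, yf, tf] (pvi_rexpr \<alpha> \<beta> \<gamma> \<delta> (RVar 3) (RVar 2) (RVar 0)) s
          = PVI_rhs th1 th2 th3 th4 (tf s) (yf s) (z s)"
      using rexpr_val_pvi_rexpr[of "[z, deriv tf, yf, tf]" \<alpha> s th4 \<beta> th1 \<gamma> th3 \<delta> th2] assms(3-6)
      by simp
    then show ?thesis
      by (simp add: divide_inverse)
  qed
  finally show ?thesis
    by (simp add: solves_PVI_at_def z_def)
qed

section \<open>The solution\<close>

definition gpoly_dpol :: gpoly where
  "gpoly_dpol = [(0, 1), (3, 3), (3, 0), (4, -4), (0, 3), (-3, -3), (1, 0)]"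

definition gpoly_dpol' :: gpoly where
  "gpoly_dpol' = [(0, -1), (3, -3), (3, 0), (4, 4), (0, -3), (-3, 3), (1, 0)]"

lemma gpoly_eval_dpol: "gpoly_eval gpoly_dpol x = dpol x"
  by (simp add: gpoly_dpol_def dpol_def eval_nat_numeral algebra_simps)

lemma gpoly_eval_dpol': "gpoly_eval gpoly_dpol' x = dpol' x"
  by (simp add: gpoly_dpol'_def dpol'_def eval_nat_numeral algebra_simps)

lemma gpoly_eval_monic_quadratic:
  "gpoly_eval [c, b, (1, 0)] x = x\<^sup>2 + complex_of_gint b * x + complex_of_gint c"
  by (simp add: algebra_simps power2_eq_square)

lemma gpoly_eval_X: "gpoly_eval [(0, 0), (1, 0)] x = x"
  by simp

definition yfun_num :: gpoly where
  "yfun_num = gpoly_smult (-1, 0) (gpoly_smult (1, 1) (gpoly_mult [(-1, 0), (0, 0), (1, 0)] (gpoly_mult [(1, 0), (0, 2), (1, 0)]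
     (gpoly_mult (gpoly_power [(1, 0), (0, -2), (1, 0)] 2) gpoly_dpol'))))"

definition yfun_den :: gpoly where
  "yfun_den = gpoly_smult (8, 0) (gpoly_mult [(0, 0), (1, 0)] (gpoly_mult [(0, 1), (0, 0), (1, 0)]
     (gpoly_mult (gpoly_power [(0, -1), (0, 0), (1, 0)] 2) gpoly_dpol)))"

definition tfun_num :: gpoly where
  "tfun_num = gpoly_mult (gpoly_power [(-1, 0), (0, 0), (1, 0)] 2)
     (gpoly_power [(1, 0), (0, 0), (6, 0), (0, 0), (1, 0)] 3)"

definition tfun_den :: gpoly where
  "tfun_den = gpoly_smult (32, 0) (gpoly_mult (gpoly_power [(0, 0), (1, 0)] 2)
     (gpoly_power [(1, 0), (0, 0), (0, 0), (0, 0), (1, 0)] 3))"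

lemma gpoly_eval_yfun_num:
  "gpoly_eval yfun_num x = - ((1 + \<i>) * (x\<^sup>2 - 1) * (x\<^sup>2 + 2*\<i> * x + 1) * (x\<^sup>2 - 2*\<i> * x + 1)\<^sup>2 * dpol' x)"
  unfolding yfun_num_def
  by (simp only: gpoly_eval_smult gpoly_eval_mult gpoly_eval_power gpoly_eval_monic_quadratic
      gpoly_eval_dpol') (simp add: mult_ac)

lemma gpoly_eval_yfun_den:
  "gpoly_eval yfun_den x = 8 * x * (x\<^sup>2 + \<i>) * (x\<^sup>2 - \<i>)\<^sup>2 * dpol x"
  unfolding yfun_den_def
  by (simp only: gpoly_eval_smult gpoly_eval_mult gpoly_eval_power gpoly_eval_monic_quadratic
      gpoly_eval_X gpoly_eval_dpol) (simp add: mult_ac)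

lemma gpoly_eval_tfun_num:
  "gpoly_eval tfun_num x = (x\<^sup>2 - 1)\<^sup>2 * (x^4 + 6 * x\<^sup>2 + 1)^3"
proof -
  have "gpoly_eval [(1, 0), (0, 0), (6, 0), (0, 0), (1, 0)] x = x^4 + 6 * x\<^sup>2 + 1"
    by (simp add: algebra_simps eval_nat_numeral)
  then show ?thesis
    unfolding tfun_num_def
    by (simp only: gpoly_eval_mult gpoly_eval_power gpoly_eval_monic_quadratic) simp
qed

lemma gpoly_eval_tfun_den:
  "gpoly_eval tfun_den x = 32 * x\<^sup>2 * (x^4 + 1)^3"
proof -
  have "gpoly_eval [(1, 0), (0, 0), (0, 0), (0, 0), (1, 0)] x = x^4 + 1"
    by (simp add: algebra_simps eval_nat_numeral)
  then show ?thesis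
    unfolding tfun_den_def
    by (simp only: gpoly_eval_smult gpoly_eval_mult gpoly_eval_power gpoly_eval_X) (simp add: mult_ac)
qed

(* The factors of the numerators and denominators of y, t, y - 1, t - 1 and y - t; the two
   sextics are dpol' (-s) and dpol (-s). *)
definition pvi_base :: "gpoly list" where
  "pvi_base =
    [[(0, 0), (1, 0)], [(0, 1), (0, 0), (1, 0)], [(0, -1), (0, 0), (1, 0)], gpoly_dpol, gpoly_dpol',
     [(-1, 0), (0, 0), (1, 0)], [(1, 0), (0, 2), (1, 0)], [(1, 0), (0, -2), (1, 0)],
     [(-1, 0), (-2, 0), (1, 0)], [(-1, 0), (2, 0), (1, 0)], [(1, 0), (0, 0), (1, 0)],
     [(0, -1), (-3, 3), (3, 0), (-4, -4), (0, -3), (3, -3), (1, 0)],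
     [(0, 1), (-3, -3), (3, 0), (-4, 4), (0, 3), (3, 3), (1, 0)]]"

lemma pvi_base_covered:
  "base_covered pvi_base
     [yfun_den, yfun_num, gpoly_diff yfun_num yfun_den,
      gpoly_diff (gpoly_mult yfun_num tfun_den) (gpoly_mult tfun_num yfun_den)]"
  by code_simp

abbreviation rrat :: "int \<Rightarrow> int \<Rightarrow> rexpr" where "rrat a b \<equiv> rdivide (rconst a) (rconst b)"

abbreviation tfun_rexpr :: rexpr where "tfun_rexpr \<equiv> rdivide (RPoly tfun_num) (RPoly tfun_den)"
abbreviation yfun_rexpr :: rexpr where "yfun_rexpr \<equiv> rdivide (RPoly yfun_num) (RPoly yfun_den)"

lemma pvi_residual_vanishes:
  "rexpr_vanishes pvi_base
     (pvi_residual (rrat 9 128) (rrat (-9) 128) (rrat 9 128) (rrat 55 128) tfun_rexpr yfun_rexpr)"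
  by code_simp

lemma yfun_eq: "yfun x = gpoly_eval yfun_num x / gpoly_eval yfun_den x"
  unfolding yfun_def gpoly_eval_yfun_num gpoly_eval_yfun_den ..

lemma tfun_eq: "tfun x = gpoly_eval tfun_num x / gpoly_eval tfun_den x"
  unfolding tfun_def gpoly_eval_tfun_num gpoly_eval_tfun_den ..

lemma yfun_eq_rexpr_val: "yfun = rexpr_val env yfun_rexpr"
  by (simp add: fun_eq_iff yfun_eq divide_inverse)

lemma tfun_eq_rexpr_val: "tfun = rexpr_val env tfun_rexpr"
  by (simp add: fun_eq_iff tfun_eq divide_inverse)

lemma pvi_base_nonzero:
  assumes "s \<noteq> 0" "s\<^sup>2 + \<i> \<noteq> 0" "s\<^sup>2 - \<i> \<noteq> 0" "dpol s \<noteq> 0"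
    and "yfun s \<noteq> 0" "yfun s \<noteq> 1" "yfun s \<noteq> tfun s"
  shows "base_nonzero pvi_base s"
proof (rule base_nonzero_if_covered[OF pvi_base_covered])
  have yden: "gpoly_eval yfun_den s \<noteq> 0"
    using assms(1-4) by (simp add: gpoly_eval_yfun_den)
  have "s^4 + 1 = (s\<^sup>2 + \<i>) * (s\<^sup>2 - \<i>)"
    by (simp add: algebra_simps eval_nat_numeral)
  then have tden: "gpoly_eval tfun_den s \<noteq> 0"
    using assms(1-3) by (simp add: gpoly_eval_tfun_den)
  have "gpoly_eval yfun_num s \<noteq> 0"
    using assms(5) by (auto simp: yfun_eq)
  moreover have "gpoly_eval yfun_num s - gpoly_eval yfun_den s \<noteq> 0"
    using assms(6) yden by (auto simp: yfun_eq)
  moreover have "gpoly_eval yfun_num s * gpoly_eval tfun_den s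
                 - gpoly_eval tfun_num s * gpoly_eval yfun_den s \<noteq> 0"
    using assms(7) yden tden by (simp add: yfun_eq tfun_eq frac_eq_eq)
  ultimately show "\<forall>p\<in>set [yfun_den, yfun_num, gpoly_diff yfun_num yfun_den,
      gpoly_diff (gpoly_mult yfun_num tfun_den) (gpoly_mult tfun_num yfun_den)]. gpoly_eval p s \<noteq> 0"
    using yden by simp
qed

theorem mainTheorem13:
  fixes s :: complex
  assumes "s \<noteq> 0" and "s^2 + \<i> \<noteq> 0" and "s^2 - \<i> \<noteq> 0" and "dpol s \<noteq> 0"
    and "deriv tfun s \<noteq> 0"
    and "tfun s \<noteq> 0" and "tfun s \<noteq> 1"
    and "yfun s \<noteq> 0" and "yfun s \<noteq> 1" and "yfun s \<noteq> tfun s"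
  shows "solves_PVI_at (3/8) (3/8) (3/8) (5/8) tfun yfun s"
proof -
  have "base_nonzero pvi_base s"
    using pvi_base_nonzero assms(1-4,8-10) by blast
  note residual = rexpr_vanishes_val[OF pvi_residual_vanishes this]
  show ?thesis
    using solves_PVI_at_iff_residual[OF tfun_eq_rexpr_val yfun_eq_rexpr_val, of "rrat 9 128" "5/8"
        "rrat (-9) 128" "3/8" "rrat 9 128" "3/8" "rrat 55 128" "3/8"] residual
    by (simp add: power2_eq_square)
qed

end
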